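(* Let $\hbar>0$ and let $f\in L^2(\mathbb{R})$ be such that the nodal set of $Wf$ is bounded and $Wf$ is centered at $z=0$. Suppose $Wf$ vanishes on the circle $|z|=R$ for some $R>0$. Then $R=\sqrt{\hbar p/2}$ where $p$ is a root of at least one Laguerre polynomial $L_n^{(k)}$ with $n\in\mathbb{N}$, $k\in\mathbb{N}_0$. Consequently, there are only countably many radii $R$ for circles centered at the origin on which such Wigner functions can vanish.
   Context: For $f,g\in L^2(\mathbb{R})$, $W(f,g)(x,p)=\frac{1}{2\pi\hbar}\int_{\mathbb{R}} f(x+\tau/2)\overline{g(x-\tau/2)}e^{-\frac{i}{\hbar}p\tau}\,d\tau$ and $Wf=W(f,f)$. Hermite functions: $h_n(x)=\frac{1}{\sqrt[4]{\pi\hbar}\sqrt{2^nn!}}e^{-x^2/(2\hbar)}H_n(x/\sqrt{\hbar})$, $H_n(x)=(-1)^ne^{x^2}\frac{d^n}{dx^n}e^{-x^2}$. A Wigner function $Wf$ with bounded nodal set is centered at $z_1$ if $Wf(z)=\sum_{n,m=0}^N b_n\overline{b_m}W(h_n,h_m)(S(z-z_1))$ for all $z$, for some $N\in\mathbb{N}_0$, $b_j\in\mathbb{C}$, and some real $2\times2$ matrix $S$ with $\det S=1$. Generalized Laguerre polynomials: $L_n^{(\alpha)}(x)=\sum_{j=0}^n(-1)^j\binom{n+\alpha}{n-j}\frac{x^j}{j!}$. *)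

theory Defs
  imports "HOL-Analysis.Analysis"
begin

text \<open>Phase-space points z = (x,p) are vectors in real^2 with x = z$1, p = z$2.\<close>

definition cross_wigner ::
  "real \<Rightarrow> (real \<Rightarrow> complex) \<Rightarrow> (real \<Rightarrow> complex) \<Rightarrow> real^2 \<Rightarrow> complex" where
  "cross_wigner hb f g z =
     complex_of_real (1 / (2 * pi * hb)) *
     integral\<^sup>L lborel (\<lambda>\<tau>. f (z$1 + \<tau>/2) * cnj (g (z$1 - \<tau>/2))
                              * cis (- (z$2 * \<tau>) / hb))"

definition wigner :: "real \<Rightarrow> (real \<Rightarrow> complex) \<Rightarrow> real^2 \<Rightarrow> complex" where
  "wigner hb f = cross_wigner hb f f"

definition square_integrable :: "(real \<Rightarrow> complex) \<Rightarrow> bool" where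
  "square_integrable f \<longleftrightarrow>
     f \<in> borel_measurable lborel \<and> integrable lborel (\<lambda>x. (norm (f x))^2)"

definition hermite_poly :: "nat \<Rightarrow> real \<Rightarrow> real" where
  "hermite_poly n x = (-1)^n * exp (x^2) * (deriv ^^ n) (\<lambda>t. exp (- (t^2))) x"

definition hermite_fun :: "real \<Rightarrow> nat \<Rightarrow> real \<Rightarrow> complex" where
  "hermite_fun hb n x = complex_of_real
     (1 / (root 4 (pi * hb) * sqrt (2^n * fact n)) * exp (- (x^2) / (2 * hb))
      * hermite_poly n (x / sqrt hb))"

definition nodal_set :: "(real^2 \<Rightarrow> complex) \<Rightarrow> (real^2) set" where
  "nodal_set F = {z. F z = 0}"

definition centered_at :: "real \<Rightarrow> (real \<Rightarrow> complex) \<Rightarrow> real^2 \<Rightarrow> bool" where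
  "centered_at hb f z1 \<longleftrightarrow>
     (\<exists>(N::nat) (b::nat \<Rightarrow> complex) (S::real^2^2). det S = 1 \<and>
        (\<forall>z. wigner hb f z =
              (\<Sum>n\<le>N. \<Sum>m\<le>N. b n * cnj (b m) *
                 cross_wigner hb (hermite_fun hb n) (hermite_fun hb m) (S *v (z - z1)))))"

definition gen_laguerre :: "nat \<Rightarrow> nat \<Rightarrow> real \<Rightarrow> real" where
  "gen_laguerre n \<alpha> x = (\<Sum>j\<le>n. (-1)^j * real ((n + \<alpha>) choose (n - j)) * x^j / fact j)"

end

(*
  Write the centered Wigner function as Sum b_n conj(b_m) W(h_n,h_m)(S z).  Integrating by
  parts in the defining integral shows that each W(h_n,h_m)(w) is a Gaussian in w times a
  complex Hermite polynomial P_(n,m)(zeta, conj zeta) of zeta = w / sqrt hb.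
  Read as a real-linear map of the complex plane, z -> S z / sqrt hb sends the circle |z| = R
  onto the ellipse alpha w + beta conj w, |w| = 1, and det S = 1 gives |alpha|^2 - |beta|^2 = R^2 / hb > 0.
  On |w| = 1 we have conj w = 1/w, so vanishing of Wf on the circle makes a Laurent polynomial
  in w vanish on the unit circle, hence on all w <> 0.  Letting w = t -> infinity, the leading
  coefficient, a multiple of (alpha conj beta)^M, must vanish, so beta = 0; the dominant term
  then is P_(n,n+k)(alpha, conj alpha), a multiple of alpha^k L_n^(k)(2 |alpha|^2) with n >= 1
  because L_0^(k) = 1.  Hence 2 R^2 / hb is a Laguerre root, and such roots are countable.
*)

theory Submission
  imports Defs "HOL-Real_Asymp.Real_Asymp" "HOL-Probability.Probability"
    "HOL-Computational_Algebra.Polynomial"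
begin

section \<open>Hermite polynomials\<close>

fun hermite :: "nat \<Rightarrow> real \<Rightarrow> real" where
  "hermite 0 x = 1"
| "hermite (Suc 0) x = 2 * x"
| "hermite (Suc (Suc n)) x = 2 * x * hermite (Suc n) x - 2 * real (Suc n) * hermite n x"

lemma hermite_Suc: "hermite (Suc n) x = 2 * x * hermite n x - 2 * real n * hermite (n - 1) x"
  by (cases n) auto

lemma has_real_derivative_hermite:
  "(hermite n has_real_derivative 2 * real n * hermite (n - 1) x) (at x)"
proof (induction n x rule: hermite.induct)
  case (3 n x)
  have "((\<lambda>x. 2 * x * hermite (Suc n) x - 2 * real (Suc n) * hermite n x) has_real_derivative
     2 * hermite (Suc n) x + 2 * x * (2 * real (Suc n) * hermite n x)
       - 2 * real (Suc n) * (2 * real n * hermite (n - 1) x)) (at x)"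
    by (auto intro!: derivative_eq_intros 3)
  moreover have "2 * hermite (Suc n) x + 2 * x * (2 * real (Suc n) * hermite n x)
       - 2 * real (Suc n) * (2 * real n * hermite (n - 1) x)
     = 2 * real (Suc (Suc n)) * hermite (Suc (Suc n) - 1) x"
    by (simp only: hermite_Suc diff_Suc_1) (simp add: algebra_simps)
  ultimately show ?case by (simp add: fun_eq_iff)
qed (auto intro!: derivative_eq_intros)

lemma continuous_on_hermite [continuous_intros]:
  "continuous_on S f \<Longrightarrow> continuous_on S (\<lambda>x. hermite n (f x))"
  by (rule continuous_on_compose2[of UNIV "hermite n"])
     (auto intro: continuous_at_imp_continuous_on DERIV_isCont has_real_derivative_hermite)

lemma higher_deriv_gaussian:
  "(deriv ^^ n) (\<lambda>t. exp (- (t^2))) = (\<lambda>t. (-1)^n * hermite n t * exp (- (t^2)))"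
proof (induction n)
  case (Suc n)
  have "((\<lambda>t. (-1)^n * hermite n t * exp (- (t^2))) has_real_derivative
          (-1)^Suc n * hermite (Suc n) x * exp (- (x^2))) (at x)" for x
  proof -
    have "((\<lambda>t. (-1)^n * hermite n t * exp (- (t^2))) has_real_derivative
       (-1)^n * (2 * real n * hermite (n - 1) x) * exp (- (x^2))
         + (-1)^n * hermite n x * (exp (- (x^2)) * (- (2 * x)))) (at x)"
      by (auto intro!: derivative_eq_intros has_real_derivative_hermite)
    then show ?thesis
      by (simp only: hermite_Suc) (simp add: algebra_simps)
  qed
  then have "deriv (\<lambda>t. (-1)^n * hermite n t * exp (- (t^2))) =
      (\<lambda>t. (-1)^Suc n * hermite (Suc n) t * exp (- (t^2)))"
    by (intro ext DERIV_imp_deriv)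
  then show ?case
    using Suc by simp
qed simp

lemma hermite_poly_eq_hermite: "hermite_poly n = hermite n"
  unfolding hermite_poly_def higher_deriv_gaussian
  by (simp add: fun_eq_iff exp_minus field_simps power_mult_distrib[symmetric] flip: power_add)

lemma hermite_polynomial_bound: "\<exists>C. \<forall>x. \<bar>hermite n x\<bar> \<le> C * (1 + \<bar>x\<bar>)^n"
proof (induction n "0::real" rule: hermite.induct)
  case 1 show ?case by (intro exI[of _ 1]) simp
next
  case 2 show ?case by (intro exI[of _ 2]) (simp add: abs_mult)
next
  case (3 n)
  obtain C1 where C1: "\<And>y. \<bar>hermite (Suc n) y\<bar> \<le> C1 * (1 + \<bar>y\<bar>)^Suc n" using 3(1) by blast
  obtain C0 where C0: "\<And>y. \<bar>hermite n y\<bar> \<le> C0 * (1 + \<bar>y\<bar>)^n" using 3(2) by blast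
  have "C0 \<ge> 0" using C0[of 0] by simp
  show ?case
  proof (intro exI allI)
    fix y :: real
    have "(1 + \<bar>y\<bar>)^n \<le> (1 + \<bar>y\<bar>)^Suc (Suc n)" by (rule power_increasing) auto
    then have "C0 * (1 + \<bar>y\<bar>)^n \<le> C0 * (1 + \<bar>y\<bar>)^Suc (Suc n)"
      using \<open>C0 \<ge> 0\<close> by (rule mult_left_mono)
    then have "real (Suc n) * \<bar>hermite n y\<bar> \<le> real (Suc n) * (C0 * (1 + \<bar>y\<bar>)^Suc (Suc n))"
      using C0[of y] by (intro mult_left_mono) auto
    moreover have "\<bar>y\<bar> * \<bar>hermite (Suc n) y\<bar> \<le> (1 + \<bar>y\<bar>) * (C1 * (1 + \<bar>y\<bar>)^Suc n)"
      using C1[of y] by (intro mult_mono) auto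
    moreover have "\<bar>hermite (Suc (Suc n)) y\<bar>
        \<le> 2 * (\<bar>y\<bar> * \<bar>hermite (Suc n) y\<bar>) + 2 * (real (Suc n) * \<bar>hermite n y\<bar>)"
      using abs_triangle_ineq4[of "2 * y * hermite (Suc n) y" "2 * real (Suc n) * hermite n y"]
      by (simp only: hermite.simps abs_mult abs_numeral abs_of_nat mult.assoc)
    ultimately have "\<bar>hermite (Suc (Suc n)) y\<bar>
        \<le> 2 * ((1 + \<bar>y\<bar>) * (C1 * (1 + \<bar>y\<bar>)^Suc n)) + 2 * (real (Suc n) * (C0 * (1 + \<bar>y\<bar>)^Suc (Suc n)))"
      by linarith
    then show "\<bar>hermite (Suc (Suc n)) y\<bar> \<le> (2 * C1 + 2 * real (Suc n) * C0) * (1 + \<bar>y\<bar>)^Suc (Suc n)"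
      by (simp add: algebra_simps)
  qed
qed

section \<open>Complex Hermite polynomials and Laguerre polynomials\<close>

definition complex_hermite_coeff :: "nat \<Rightarrow> nat \<Rightarrow> nat \<Rightarrow> complex" where
  "complex_hermite_coeff n m c = of_nat (n choose c) * of_nat (m choose c) * fact c * (-2)^c"

text \<open>With the complex Hermite polynomials
  \<open>H_(m,n)(z, w) = Sum_k (-1)^k k! C(m,k) C(n,k) z^(m-k) w^(n-k)\<close>, we have
  \<^term>\<open>complex_hermite n m u v\<close> \<open>= 2^((m+n)/2) H_(m,n)(sqrt 2 u, sqrt 2 v)\<close>.\<close>

definition complex_hermite :: "nat \<Rightarrow> nat \<Rightarrow> complex \<Rightarrow> complex \<Rightarrow> complex" where
  "complex_hermite n m u v =
     (\<Sum>c\<le>n. complex_hermite_coeff n m c * (2 * u)^(m - c) * (2 * v)^(n - c))"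

lemma complex_hermite_coeff_eq_0: "n < c \<or> m < c \<Longrightarrow> complex_hermite_coeff n m c = 0"
  by (auto simp: complex_hermite_coeff_def)

lemma complex_hermite_coeff_0 [simp]: "complex_hermite_coeff n m 0 = 1"
  by (simp add: complex_hermite_coeff_def)

lemma complex_hermite_coeff_Suc:
  "complex_hermite_coeff (Suc n) m (Suc d) =
     complex_hermite_coeff n m (Suc d) - 2 * of_nat m * complex_hermite_coeff n (m - 1) d"
proof -
  have "(m choose Suc d) * fact (Suc d) = m * ((m - 1) choose d) * (fact d :: nat)"
  proof (cases m)
    case (Suc m')
    have "(Suc m' choose Suc d) * fact (Suc d) = (Suc d * (Suc m' choose Suc d)) * (fact d :: nat)"
      by (simp add: algebra_simps)
    then show ?thesis
      using Suc by (simp only: Suc_times_binomial) simp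
  qed simp
  then have "of_nat (m choose Suc d) * (fact (Suc d) :: complex) = of_nat m * of_nat ((m - 1) choose d) * fact d"
    by (metis (mono_tags) of_nat_fact of_nat_mult)
  then show ?thesis
    unfolding complex_hermite_coeff_def binomial_Suc_Suc of_nat_add
    by (simp add: algebra_simps)
qed

lemma complex_hermite_0_0 [simp]: "complex_hermite 0 0 u v = 1"
  by (simp add: complex_hermite_def)

lemma complex_hermite_0_Suc: "complex_hermite 0 (Suc m) u v = 2 * u * complex_hermite 0 m u v"
  by (simp add: complex_hermite_def)

lemma complex_hermite_Suc:
  "complex_hermite (Suc n) m u v = 2 * v * complex_hermite n m u v - 2 * of_nat m * complex_hermite n (m - 1) u v"
proof -
  have "complex_hermite (Suc n) m u v =
      (2 * u)^m * (2 * v)^Suc n + (\<Sum>d\<le>n. complex_hermite_coeff (Suc n) m (Suc d) * (2 * u)^(m - Suc d) * (2 * v)^(n - d))"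
    unfolding complex_hermite_def by (subst sum.atMost_Suc_shift) simp
  also have "\<dots> = (2 * u)^m * (2 * v)^Suc n
      + (\<Sum>d\<le>n. complex_hermite_coeff n m (Suc d) * (2 * u)^(m - Suc d) * (2 * v)^(n - d))
      - 2 * of_nat m * (\<Sum>d\<le>n. complex_hermite_coeff n (m - 1) d * (2 * u)^(m - 1 - d) * (2 * v)^(n - d))"
    by (simp add: complex_hermite_coeff_Suc sum_distrib_left sum_subtractf algebra_simps)
  also have "(2 * u)^m * (2 * v)^Suc n
      + (\<Sum>d\<le>n. complex_hermite_coeff n m (Suc d) * (2 * u)^(m - Suc d) * (2 * v)^(n - d))
      = (\<Sum>c\<le>Suc n. complex_hermite_coeff n m c * (2 * u)^(m - c) * (2 * v)^(Suc n - c))"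
    by (subst sum.atMost_Suc_shift) simp
  also have "\<dots> = 2 * v * complex_hermite n m u v"
    by (auto simp: complex_hermite_def complex_hermite_coeff_eq_0 Suc_diff_le sum_distrib_left intro!: sum.cong)
  also have "(\<Sum>d\<le>n. complex_hermite_coeff n (m - 1) d * (2 * u)^(m - 1 - d) * (2 * v)^(n - d))
      = complex_hermite n (m - 1) u v"
    by (simp add: complex_hermite_def)
  finally show ?thesis .
qed

lemma complex_hermite_scale:
  assumes "c \<noteq> 0"
  shows "complex_hermite n m (u * c) (v / c) * c^n = c^m * complex_hermite n m u v"
  unfolding complex_hermite_def sum_distrib_right sum_distrib_left
proof (rule sum.cong[OF refl])
  fix d
  show "complex_hermite_coeff n m d * (2 * (u * c))^(m - d) * (2 * (v / c))^(n - d) * c^n =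
      c^m * (complex_hermite_coeff n m d * (2 * u)^(m - d) * (2 * v)^(n - d))"
  proof (cases "d \<le> n \<and> d \<le> m")
    case True
    then have "c^n = c^(n - d) * c^d" "c^m = c^(m - d) * c^d"
      by (simp_all flip: power_add)
    then show ?thesis
      using assms by (simp add: power_mult_distrib power_divide field_simps)
  qed (auto simp: complex_hermite_coeff_eq_0)
qed

lemma gen_laguerre_0 [simp]: "gen_laguerre 0 k x = 1"
  by (simp add: gen_laguerre_def)

lemma finite_gen_laguerre_roots: "finite {x. gen_laguerre n k x = 0}"
proof -
  define Q where "Q = (\<Sum>j\<le>n. smult ((-1)^j * real ((n + k) choose (n - j)) / fact j) ([:0, 1:]^j))"
  have Q: "poly Q x = gen_laguerre n k x" for x
    by (simp add: Q_def gen_laguerre_def poly_sum poly_power)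
  have "poly Q 0 = real ((n + k) choose n)"
    unfolding Q gen_laguerre_def by (simp add: zero_power)
  then have "Q \<noteq> 0"
    by auto
  then show ?thesis
    using poly_roots_finite[of Q] by (simp add: Q)
qed

lemma laguerre_coeff_eq:
  fixes r :: real
  assumes "j \<le> n"
  shows "real (n choose (n - j)) * real ((n + k) choose (n - j)) * fact (n - j) * (-2)^(n - j) * 2^(k + j) * 2^j * r^j
    = (-2)^n * 2^k * fact n * ((-1)^j * real ((n + k) choose (n - j)) * (2 * r)^j / fact j)"
proof -
  have "fact (n - j) * fact j * (n choose (n - j)) = (fact n :: nat)"
    using binomial_fact_lemma[of "n - j" n] assms by simp
  then have "fact (n - j) * fact j * real (n choose (n - j)) = fact n"
    by (metis of_nat_fact of_nat_mult)
  then have f: "fact (n - j) * real (n choose (n - j)) = fact n / fact j"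
    by (simp add: field_simps)
  have "(-1::real)^j * 2^j = (-2)^j"
    by (simp flip: power_mult_distrib)
  then have p: "(-2::real)^n = (-2)^(n - j) * (-1)^j * 2^j"
    using assms by (simp add: mult.assoc flip: power_add)
  show ?thesis
    unfolding p using f by (simp add: power_mult_distrib power_add field_simps)
qed

lemma complex_hermite_laguerre:
  "complex_hermite n (n + k) \<alpha> (cnj \<alpha>) =
     \<alpha>^k * of_real ((-2)^n * 2^k * fact n * gen_laguerre n k (2 * (cmod \<alpha>)^2))"
proof -
  let ?r = "(cmod \<alpha>)^2"
  have "complex_hermite n (n + k) \<alpha> (cnj \<alpha>) =
      (\<Sum>j=0..n. complex_hermite_coeff n (n + k) (n - j) * (2 * \<alpha>)^(n + k - (n - j)) * (2 * cnj \<alpha>)^(n - (n - j)))"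
    unfolding complex_hermite_def atMost_atLeast0 by (subst sum.atLeastAtMost_rev) simp
  also have "\<dots> = (\<Sum>j=0..n. \<alpha>^k * of_real ((-2)^n * 2^k * fact n *
      ((-1)^j * real ((n + k) choose (n - j)) * (2 * ?r)^j / fact j)))"
  proof (rule sum.cong[OF refl])
    fix j assume "j \<in> {0..n}"
    then have j: "j \<le> n" "n + k - (n - j) = k + j" "n - (n - j) = j"
      by auto
    have "(2 * \<alpha>)^(k + j) * (2 * cnj \<alpha>)^j = \<alpha>^k * 2^(k + j) * 2^j * (\<alpha> * cnj \<alpha>)^j"
      by (simp add: power_mult_distrib power_add)
    also have "\<alpha> * cnj \<alpha> = of_real ?r"
      by (rule complex_norm_square[symmetric])
    finally show "complex_hermite_coeff n (n + k) (n - j) * (2 * \<alpha>)^(n + k - (n - j)) * (2 * cnj \<alpha>)^(n - (n - j))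
        = \<alpha>^k * of_real ((-2)^n * 2^k * fact n * ((-1)^j * real ((n + k) choose (n - j)) * (2 * ?r)^j / fact j))"
      unfolding j(2,3) laguerre_coeff_eq[OF j(1), symmetric] complex_hermite_coeff_def
      by (simp add: algebra_simps)
  qed
  also have "\<dots> = \<alpha>^k * of_real ((-2)^n * 2^k * fact n * gen_laguerre n k (2 * ?r))"
    unfolding gen_laguerre_def atMost_atLeast0 by (simp only: sum_distrib_left of_real_sum)
  finally show ?thesis .
qed

lemma complex_hermite_eq_0_iff_gen_laguerre:
  assumes "\<alpha> \<noteq> 0" "n \<le> m"
  shows "complex_hermite n m \<alpha> (cnj \<alpha>) = 0 \<longleftrightarrow> gen_laguerre n (m - n) (2 * (cmod \<alpha>)^2) = 0"
  using complex_hermite_laguerre[of n "m - n" \<alpha>] assms by simp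

section \<open>Gaussian integrals of functions of moderate growth\<close>

definition moderate_growth :: "(real \<Rightarrow> 'a::real_normed_vector) \<Rightarrow> bool" where
  "moderate_growth g \<longleftrightarrow> continuous_on UNIV g \<and> (\<exists>K N. \<forall>u. norm (g u) \<le> K * (1 + \<bar>u\<bar>)^N)"

lemma moderate_growthI:
  "continuous_on UNIV g \<Longrightarrow> (\<And>u. norm (g u) \<le> K * (1 + \<bar>u\<bar>)^N) \<Longrightarrow> moderate_growth g"
  unfolding moderate_growth_def by blast

lemma moderate_growthE:
  assumes "moderate_growth g"
  obtains K N where "continuous_on UNIV g" "K \<ge> 0" "\<And>u. norm (g u) \<le> K * (1 + \<bar>u\<bar>)^N"
proof -
  obtain K N where "continuous_on UNIV g" "\<And>u. norm (g u) \<le> K * (1 + \<bar>u\<bar>)^N"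
    using assms unfolding moderate_growth_def by blast
  moreover from this(2)[of 0] have "K \<ge> 0" by (simp add: order_trans[OF norm_ge_zero])
  ultimately show thesis by (blast intro: that)
qed

lemma moderate_growth_const: "moderate_growth (\<lambda>u. c)"
  by (rule moderate_growthI[where K = "norm c" and N = 0]) auto

lemma moderate_growth_of_real: "moderate_growth (\<lambda>u. of_real u :: 'a::real_normed_algebra_1)"
  by (rule moderate_growthI[where K = 1 and N = 1]) (auto intro: continuous_intros)

lemma moderate_growth_cis: "moderate_growth (\<lambda>u. cis (k * u))"
  by (rule moderate_growthI[where K = 1 and N = 0]) (auto simp: cis_conv_exp intro!: continuous_intros)

lemma moderate_growth_hermite: "moderate_growth (\<lambda>u. of_real (hermite n u) :: 'a::real_normed_algebra_1)"
proof -
  obtain C where "\<And>x. \<bar>hermite n x\<bar> \<le> C * (1 + \<bar>x\<bar>)^n"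
    using hermite_polynomial_bound by blast
  then show ?thesis
    by (intro moderate_growthI[where K = C and N = n]) (auto intro!: continuous_intros)
qed

lemma moderate_growth_add:
  assumes "moderate_growth f" "moderate_growth g"
  shows "moderate_growth (\<lambda>u. f u + g u)"
proof -
  obtain K1 N1 where f: "continuous_on UNIV f" "K1 \<ge> 0" "\<And>u. norm (f u) \<le> K1 * (1 + \<bar>u\<bar>)^N1"
    using assms(1) by (rule moderate_growthE) blast
  obtain K2 N2 where g: "continuous_on UNIV g" "K2 \<ge> 0" "\<And>u. norm (g u) \<le> K2 * (1 + \<bar>u\<bar>)^N2"
    using assms(2) by (rule moderate_growthE) blast
  show ?thesis
  proof (rule moderate_growthI[where K = "K1 + K2" and N = "N1 + N2"])
    show "continuous_on UNIV (\<lambda>u. f u + g u)" using f g by (intro continuous_intros)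
    fix u :: real
    have "K1 * (1 + \<bar>u\<bar>)^N1 \<le> K1 * (1 + \<bar>u\<bar>)^(N1 + N2)"
      using f(2) by (intro mult_left_mono power_increasing) auto
    moreover have "K2 * (1 + \<bar>u\<bar>)^N2 \<le> K2 * (1 + \<bar>u\<bar>)^(N1 + N2)"
      using g(2) by (intro mult_left_mono power_increasing) auto
    ultimately show "norm (f u + g u) \<le> (K1 + K2) * (1 + \<bar>u\<bar>)^(N1 + N2)"
      using norm_triangle_ineq[of "f u" "g u"] f(3)[of u] g(3)[of u] by (simp add: distrib_right)
  qed
qed

lemma moderate_growth_uminus: "moderate_growth g \<Longrightarrow> moderate_growth (\<lambda>u. - g u)"
  unfolding moderate_growth_def by (auto intro: continuous_intros)

lemma moderate_growth_diff:
  "moderate_growth f \<Longrightarrow> moderate_growth g \<Longrightarrow> moderate_growth (\<lambda>u. f u - g u)"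
  using moderate_growth_add[of f "\<lambda>u. - g u"] moderate_growth_uminus[of g] by simp

lemma moderate_growth_mult:
  fixes f g :: "real \<Rightarrow> 'a::real_normed_algebra"
  assumes "moderate_growth f" "moderate_growth g"
  shows "moderate_growth (\<lambda>u. f u * g u)"
proof -
  obtain K1 N1 where f: "continuous_on UNIV f" "K1 \<ge> 0" "\<And>u. norm (f u) \<le> K1 * (1 + \<bar>u\<bar>)^N1"
    using assms(1) by (rule moderate_growthE) blast
  obtain K2 N2 where g: "continuous_on UNIV g" "K2 \<ge> 0" "\<And>u. norm (g u) \<le> K2 * (1 + \<bar>u\<bar>)^N2"
    using assms(2) by (rule moderate_growthE) blast
  show ?thesis
  proof (rule moderate_growthI[where K = "K1 * K2" and N = "N1 + N2"])
    show "continuous_on UNIV (\<lambda>u. f u * g u)" using f g by (intro continuous_intros)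
    fix u :: real
    have "norm (f u * g u) \<le> norm (f u) * norm (g u)" by (rule norm_mult_ineq)
    also have "\<dots> \<le> (K1 * (1 + \<bar>u\<bar>)^N1) * (K2 * (1 + \<bar>u\<bar>)^N2)"
      using f(2) by (intro mult_mono f(3) g(3)) auto
    finally show "norm (f u * g u) \<le> K1 * K2 * (1 + \<bar>u\<bar>)^(N1 + N2)"
      by (simp add: power_add algebra_simps)
  qed
qed

lemma moderate_growth_affine_comp:
  assumes "moderate_growth g"
  shows "moderate_growth (\<lambda>u. g (a + b * u))"
proof -
  obtain K N where g: "continuous_on UNIV g" "K \<ge> 0" "\<And>u. norm (g u) \<le> K * (1 + \<bar>u\<bar>)^N"
    using assms by (rule moderate_growthE) blast
  show ?thesis
  proof (rule moderate_growthI[where K = "K * (1 + \<bar>a\<bar> + \<bar>b\<bar>)^N" and N = N])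
    show "continuous_on UNIV (\<lambda>u. g (a + b * u))"
      by (rule continuous_on_compose2[OF g(1)]) (auto intro: continuous_intros)
    fix u :: real
    have "\<bar>a + b * u\<bar> \<le> \<bar>a\<bar> + \<bar>b\<bar> * \<bar>u\<bar>"
      using abs_triangle_ineq[of a "b * u"] by (simp add: abs_mult)
    also have "\<dots> \<le> \<bar>a\<bar> + \<bar>b\<bar> + \<bar>u\<bar> + (\<bar>a\<bar> + \<bar>b\<bar>) * \<bar>u\<bar>"
      by (simp add: distrib_right)
    finally have "1 + \<bar>a + b * u\<bar> \<le> (1 + \<bar>a\<bar> + \<bar>b\<bar>) * (1 + \<bar>u\<bar>)"
      by (simp add: algebra_simps)
    then have "K * (1 + \<bar>a + b * u\<bar>)^N \<le> K * ((1 + \<bar>a\<bar> + \<bar>b\<bar>) * (1 + \<bar>u\<bar>))^N"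
      using g(2) by (intro mult_left_mono power_mono) auto
    then show "norm (g (a + b * u)) \<le> K * (1 + \<bar>a\<bar> + \<bar>b\<bar>)^N * (1 + \<bar>u\<bar>)^N"
      using g(3)[of "a + b * u"] by (simp add: power_mult_distrib mult.assoc)
  qed
qed

lemmas moderate_growth_intros =
  moderate_growth_const moderate_growth_of_real moderate_growth_cis moderate_growth_hermite
  moderate_growth_add moderate_growth_diff moderate_growth_mult

definition gauss_integral :: "(real \<Rightarrow> complex) \<Rightarrow> complex" where
  "gauss_integral g = (\<integral>u. of_real (exp (- (u^2))) * g u \<partial>lborel)"

lemma integrable_gauss:
  fixes g :: "real \<Rightarrow> complex"
  assumes "moderate_growth g"
  shows "integrable lborel (\<lambda>u. of_real (exp (- (u^2))) * g u)"
proof -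
  obtain K N where g: "continuous_on UNIV g" "K \<ge> 0" "\<And>u. norm (g u) \<le> K * (1 + \<bar>u\<bar>)^N"
    using assms by (rule moderate_growthE) blast
  have gauss: "exp (- (u^2)) = sqrt pi * normal_density 0 (1 / sqrt 2) u" for u
    by (simp add: normal_density_def power_divide real_sqrt_divide)
  have "K * (exp (- (u^2)) * (1 + \<bar>u\<bar>)^N) = (\<Sum>k\<le>N.
      (K * sqrt pi * real (N choose k)) * (normal_density 0 (1 / sqrt 2) u * \<bar>u - 0\<bar>^k))"
    (is "_ = ?expansion u") for u
  proof -
    have "(1 + \<bar>u\<bar>)^N = (\<Sum>k\<le>N. real (N choose k) * \<bar>u\<bar>^k)"
      using binomial_ring[of "\<bar>u\<bar>" 1 N] by (simp add: add.commute)
    then show ?thesis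
      unfolding gauss by (simp add: sum_distrib_left mult_ac)
  qed
  moreover have "integrable lborel ?expansion"
    by (intro Bochner_Integration.integrable_sum integrable_mult_right integrable_normal_moment_abs) auto
  ultimately have "integrable lborel (\<lambda>u. K * (exp (- (u^2)) * (1 + \<bar>u\<bar>)^N))"
    by simp
  then show ?thesis
  proof (rule Bochner_Integration.integrable_bound)
    show "(\<lambda>u. of_real (exp (- (u^2))) * g u) \<in> borel_measurable lborel"
      using g(1) by (simp add: borel_measurable_continuous_onI continuous_intros)
    show "AE u in lborel. norm (of_real (exp (- (u^2))) * g u) \<le> norm (K * (exp (- (u^2)) * (1 + \<bar>u\<bar>)^N))"
      using g(2,3) by (auto simp: norm_mult mult.left_commute[of K] intro!: mult_left_mono)
  qed
qed

lemma gauss_integral_add: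
  "moderate_growth f \<Longrightarrow> moderate_growth g \<Longrightarrow>
    gauss_integral (\<lambda>u. f u + g u) = gauss_integral f + gauss_integral g"
  unfolding gauss_integral_def
  by (simp add: distrib_left integrable_gauss Bochner_Integration.integral_add)

lemma gauss_integral_diff:
  "moderate_growth f \<Longrightarrow> moderate_growth g \<Longrightarrow>
    gauss_integral (\<lambda>u. f u - g u) = gauss_integral f - gauss_integral g"
  unfolding gauss_integral_def
  by (simp add: right_diff_distrib integrable_gauss Bochner_Integration.integral_diff)

lemma gauss_integral_cmult: "gauss_integral (\<lambda>u. c * g u) = c * gauss_integral g"
  unfolding gauss_integral_def by (simp add: mult.left_commute[of _ c])

lemma tendsto_gauss_mult_0:
  fixes g :: "real \<Rightarrow> complex"
  assumes "moderate_growth g"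
  shows "((\<lambda>u. of_real (exp (- (u^2))) * g u) \<longlongrightarrow> 0) at_top"
    and "((\<lambda>u. of_real (exp (- (u^2))) * g u) \<longlongrightarrow> 0) at_bot"
proof -
  obtain K N where g: "continuous_on UNIV g" "K \<ge> 0" "\<And>u. norm (g u) \<le> K * (1 + \<bar>u\<bar>)^N"
    using assms by (rule moderate_growthE) blast
  have "norm (of_real (exp (- (u^2))) * g u) \<le> K * (exp (- (u^2)) * (1 + \<bar>u\<bar>)^N)" for u
  proof -
    have "norm (of_real (exp (- (u^2))) * g u) = exp (- (u^2)) * norm (g u)"
      by (simp add: norm_mult)
    also have "\<dots> \<le> exp (- (u^2)) * (K * (1 + \<bar>u\<bar>)^N)"
      using g(3) by (intro mult_left_mono) auto
    finally show ?thesis by (simp add: algebra_simps)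
  qed
  then have bound: "\<forall>\<^sub>F u in F. norm (of_real (exp (- (u^2))) * g u) \<le> K * (exp (- (u^2)) * (1 + \<bar>u\<bar>)^N)" for F
    by (intro always_eventually allI)
  have "((\<lambda>u::real. K * (exp (- (u^2)) * (1 + \<bar>u\<bar>)^N)) \<longlongrightarrow> 0) at_top"
    by (intro tendsto_mult_right_zero) real_asymp
  then show "((\<lambda>u. of_real (exp (- (u^2))) * g u) \<longlongrightarrow> 0) at_top"
    by (rule Lim_null_comparison[OF bound])
  have "((\<lambda>u::real. K * (exp (- (u^2)) * (1 + \<bar>u\<bar>)^N)) \<longlongrightarrow> 0) at_bot"
    by (intro tendsto_mult_right_zero) real_asymp
  then show "((\<lambda>u. of_real (exp (- (u^2))) * g u) \<longlongrightarrow> 0) at_bot"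
    by (rule Lim_null_comparison[OF bound])
qed

lemma lborel_integral_derivative_eq_0:
  fixes F f :: "real \<Rightarrow> complex"
  assumes "\<And>x. (F has_vector_derivative f x) (at x)" "continuous_on UNIV f"
    and "integrable lborel f" "(F \<longlongrightarrow> 0) at_top" "(F \<longlongrightarrow> 0) at_bot"
  shows "integral\<^sup>L lborel f = 0"
proof -
  have "(LBINT x=-\<infinity>..\<infinity>. f x) = 0 - 0"
    by (rule interval_integral_FTC_integrable[where F = F])
       (use assms in \<open>auto simp: ereal_tendsto_simps set_integrable_def einterval_def
          continuous_on_eq_continuous_at\<close>)
  then show ?thesis
    by (simp add: interval_lebesgue_integral_def einterval_def set_lebesgue_integral_def)
qed

lemma gauss_integral_by_parts:
  fixes g :: "real \<Rightarrow> complex"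
  assumes "\<And>u. (g has_vector_derivative g' u) (at u)"
    and "moderate_growth g" "moderate_growth g'"
  shows "gauss_integral (\<lambda>u. 2 * of_real u * g u) = gauss_integral g'"
proof -
  have ug: "moderate_growth (\<lambda>u. 2 * of_real u * g u)"
    using assms(2) by (intro moderate_growth_intros)
  have "(\<integral>u. of_real (exp (- (u^2))) * g' u - of_real (exp (- (u^2))) * (2 * of_real u * g u) \<partial>lborel) = 0"
  proof (rule lborel_integral_derivative_eq_0[where F = "\<lambda>u. of_real (exp (- (u^2))) * g u"])
    fix x
    have "((\<lambda>u. of_real (exp (- (u^2))) * g u) has_vector_derivative
        of_real (exp (- (x^2))) * g' x + of_real (exp (- (x^2)) * - (2 * x)) * g x) (at x)"
      by (intro has_vector_derivative_mult has_vector_derivative_of_real assms(1))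
         (auto intro!: derivative_eq_intros)
    then show "((\<lambda>u. of_real (exp (- (u^2))) * g u) has_vector_derivative
        of_real (exp (- (x^2))) * g' x - of_real (exp (- (x^2))) * (2 * of_real x * g x)) (at x)"
      by (rule has_vector_derivative_eq_rhs) (simp add: algebra_simps)
  next
    show "continuous_on UNIV (\<lambda>u. of_real (exp (- (u^2))) * g' u - of_real (exp (- (u^2))) * (2 * of_real u * g u))"
      using assms(3) ug unfolding moderate_growth_def by (auto intro!: continuous_intros)
    show "integrable lborel (\<lambda>u. of_real (exp (- (u^2))) * g' u - of_real (exp (- (u^2))) * (2 * of_real u * g u))"
      using assms(3) ug by (intro Bochner_Integration.integrable_diff integrable_gauss)
  qed (use tendsto_gauss_mult_0[OF assms(2)] in auto)
  then show ?thesis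
    unfolding gauss_integral_def
    using integrable_gauss[OF assms(3)] integrable_gauss[OF ug] by simp
qed

lemma gauss_integral_cis: "gauss_integral (\<lambda>u. cis (k * u)) = sqrt pi * exp (- (k^2) / 4)"
proof -
  define t where "t = k / sqrt 2"
  have "(\<integral>x. std_normal_density x *\<^sub>R iexp (t * x) \<partial>lborel) = char std_normal_distribution t"
    unfolding char_def
    by (rule integral_density[symmetric]) (auto intro!: borel_measurable_continuous_onI continuous_intros)
  also have "\<dots> = exp (- (k^2) / 4)"
    by (simp add: char_std_normal_distribution t_def power_divide)
  finally have char: "(\<integral>x. std_normal_density x *\<^sub>R iexp (t * x) \<partial>lborel) = exp (- (k^2) / 4)" .
  have substitution: "sqrt 2 *\<^sub>R (std_normal_density (sqrt 2 * u) *\<^sub>R iexp (t * (sqrt 2 * u)))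
      = of_real (1 / sqrt pi) * (of_real (exp (- (u^2))) * cis (k * u))" for u
  proof -
    have "iexp (t * (sqrt 2 * u)) = cis (k * u)"
      by (simp add: t_def cis_conv_exp)
    then have "sqrt 2 *\<^sub>R (std_normal_density (sqrt 2 * u) *\<^sub>R iexp (t * (sqrt 2 * u)))
        = (sqrt 2 * std_normal_density (sqrt 2 * u)) *\<^sub>R cis (k * u)"
      by simp
    also have "sqrt 2 * std_normal_density (sqrt 2 * u) = (1 / sqrt pi) * exp (- (u^2))"
      by (simp add: std_normal_density_def power_mult_distrib real_sqrt_mult)
    finally show ?thesis
      by (simp add: scaleR_conv_of_real)
  qed
  have "(\<integral>x. std_normal_density x *\<^sub>R iexp (t * x) \<partial>lborel)
      = sqrt 2 *\<^sub>R (\<integral>u. std_normal_density (sqrt 2 * u) *\<^sub>R iexp (t * (sqrt 2 * u)) \<partial>lborel)"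
    by (rule lborel_integral_real_affine[where c = "sqrt 2" and t = 0, simplified])
  also have "\<dots> = gauss_integral (\<lambda>u. cis (k * u)) / sqrt pi"
    unfolding gauss_integral_def integral_scaleR_right[symmetric] substitution by simp
  finally show ?thesis
    using char by (simp add: field_simps)
qed

section \<open>The phase plane as the complex plane\<close>

definition complex_of_vec :: "real^2 \<Rightarrow> complex" where
  "complex_of_vec z = Complex (z$1) (z$2)"

definition vec_of_complex :: "complex \<Rightarrow> real^2" where
  "vec_of_complex w = vector [Re w, Im w]"

lemma complex_of_vec_of_complex [simp]: "complex_of_vec (vec_of_complex w) = w"
  by (simp add: complex_of_vec_def vec_of_complex_def complex_eq_iff)

lemma norm_vec_of_complex [simp]: "norm (vec_of_complex w) = cmod w"
  by (simp add: vec_of_complex_def norm_vec_def L2_set_def sum_2 cmod_def)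

definition complex_linear_part :: "real^2^2 \<Rightarrow> complex" where
  "complex_linear_part S = Complex (S$1$1 + S$2$2) (S$2$1 - S$1$2) / 2"

definition complex_antilinear_part :: "real^2^2 \<Rightarrow> complex" where
  "complex_antilinear_part S = Complex (S$1$1 - S$2$2) (S$2$1 + S$1$2) / 2"

lemma complex_of_vec_matrix_vector_mult:
  "complex_of_vec (S *v z) =
     complex_linear_part S * complex_of_vec z + complex_antilinear_part S * cnj (complex_of_vec z)"
  by (simp add: complex_of_vec_def complex_linear_part_def complex_antilinear_part_def
      matrix_vector_mult_def sum_2 complex_eq_iff field_simps)

lemma det_eq_complex_parts:
  "(cmod (of_real r * complex_linear_part S))^2 - (cmod (of_real r * complex_antilinear_part S))^2 = r^2 * det S"
proof -
  have "det S = (cmod (complex_linear_part S))^2 - (cmod (complex_antilinear_part S))^2"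
    by (simp add: det_2 complex_linear_part_def complex_antilinear_part_def norm_divide power_divide cmod_power2)
       (simp add: power2_eq_square field_simps)
  then show ?thesis
    by (simp add: norm_mult power_mult_distrib right_diff_distrib)
qed

lemma complex_of_vec_circle:
  assumes "cmod w = 1"
  shows "complex_of_vec (S *v vec_of_complex (of_real r * w)) =
    of_real r * (complex_linear_part S * w + complex_antilinear_part S / w)"
proof -
  have "cnj w = 1 / w"
    using assms by (simp add: divide_conv_cnj)
  then show ?thesis
    by (simp add: complex_of_vec_matrix_vector_mult algebra_simps)
qed

section \<open>Cross-Wigner transforms of Hermite functions\<close>

definition hermite_wigner_kernel :: "nat \<Rightarrow> nat \<Rightarrow> real \<Rightarrow> real \<Rightarrow> real \<Rightarrow> complex" where
  "hermite_wigner_kernel n m x p u = of_real (hermite n (x + u) * hermite m (x - u)) * cis (- 2 * p * u)"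

definition hermite_wigner_integral :: "nat \<Rightarrow> nat \<Rightarrow> real \<Rightarrow> real \<Rightarrow> complex" where
  "hermite_wigner_integral n m x p = gauss_integral (hermite_wigner_kernel n m x p)"

lemma moderate_growth_hermite_wigner_kernel: "moderate_growth (hermite_wigner_kernel n m x p)"
proof -
  have "moderate_growth
      (\<lambda>u. of_real (hermite n (x + 1 * u)) * of_real (hermite m (x + (-1) * u)) * cis ((- 2 * p) * u))"
    by (intro moderate_growth_intros moderate_growth_affine_comp[of "\<lambda>u. of_real (hermite _ u)"])
  then show ?thesis
    unfolding hermite_wigner_kernel_def[abs_def] by simp
qed

lemma has_vector_derivative_cis: "((\<lambda>u. cis (k * u)) has_vector_derivative \<i> * k * cis (k * u)) (at u)"
proof -
  have "((\<lambda>z. exp (\<i> * of_real k * z)) has_field_derivative \<i> * k * exp (\<i> * k * u)) (at (of_real u))"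
    by (auto intro!: derivative_eq_intros)
  from has_vector_derivative_real_field[OF this] show ?thesis
    by (simp add: cis_conv_exp mult.assoc)
qed

lemma has_vector_derivative_hermite_wigner_kernel:
  "(hermite_wigner_kernel n m x p has_vector_derivative
     2 * of_nat n * hermite_wigner_kernel (n - 1) m x p u - 2 * of_nat m * hermite_wigner_kernel n (m - 1) x p u
     - 2 * \<i> * p * hermite_wigner_kernel n m x p u) (at u)"
proof -
  have "((\<lambda>u. hermite n (x + u) * hermite m (x - u)) has_real_derivative
      2 * real n * hermite (n - 1) (x + u) * hermite m (x - u) - 2 * real m * hermite n (x + u) * hermite (m - 1) (x - u)) (at u)"
    by (rule DERIV_cong, rule DERIV_mult[OF DERIV_chain2[OF has_real_derivative_hermite]
          DERIV_chain2[OF has_real_derivative_hermite]])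
       (auto intro!: derivative_eq_intros simp: algebra_simps)
  from has_vector_derivative_mult[OF has_vector_derivative_of_real[OF this] has_vector_derivative_cis]
  show ?thesis
    unfolding hermite_wigner_kernel_def[abs_def]
    by (rule has_vector_derivative_eq_rhs) (simp add: algebra_simps)
qed

lemma hermite_wigner_integral_by_parts:
  "gauss_integral (\<lambda>u. 2 * of_real u * hermite_wigner_kernel n m x p u) =
     2 * of_nat n * hermite_wigner_integral (n - 1) m x p - 2 * of_nat m * hermite_wigner_integral n (m - 1) x p
     - 2 * \<i> * p * hermite_wigner_integral n m x p"
  unfolding hermite_wigner_integral_def
  by (subst gauss_integral_by_parts[OF has_vector_derivative_hermite_wigner_kernel])
     (simp_all add: gauss_integral_diff gauss_integral_cmult moderate_growth_intros
        moderate_growth_hermite_wigner_kernel)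

lemma hermite_wigner_integral_Suc_left:
  "hermite_wigner_integral (Suc n) m x p =
     2 * Complex x (- p) * hermite_wigner_integral n m x p - 2 * of_nat m * hermite_wigner_integral n (m - 1) x p"
proof -
  have "hermite_wigner_kernel (Suc n) m x p = (\<lambda>u. 2 * x * hermite_wigner_kernel n m x p u
      + 2 * of_real u * hermite_wigner_kernel n m x p u - 2 * of_nat n * hermite_wigner_kernel (n - 1) m x p u)"
    by (simp add: fun_eq_iff hermite_wigner_kernel_def hermite_Suc algebra_simps)
  then have "hermite_wigner_integral (Suc n) m x p = 2 * x * hermite_wigner_integral n m x p
      + gauss_integral (\<lambda>u. 2 * of_real u * hermite_wigner_kernel n m x p u)
      - 2 * of_nat n * hermite_wigner_integral (n - 1) m x p"
    unfolding hermite_wigner_integral_def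
    by (simp add: gauss_integral_add gauss_integral_diff gauss_integral_cmult moderate_growth_intros
        moderate_growth_hermite_wigner_kernel)
  then show ?thesis
    unfolding hermite_wigner_integral_by_parts by (simp add: complex_eq_iff algebra_simps)
qed

lemma hermite_wigner_integral_Suc_right:
  "hermite_wigner_integral n (Suc m) x p =
     2 * Complex x p * hermite_wigner_integral n m x p - 2 * of_nat n * hermite_wigner_integral (n - 1) m x p"
proof -
  have "hermite_wigner_kernel n (Suc m) x p = (\<lambda>u. 2 * x * hermite_wigner_kernel n m x p u
      - 2 * of_real u * hermite_wigner_kernel n m x p u - 2 * of_nat m * hermite_wigner_kernel n (m - 1) x p u)"
    by (simp add: fun_eq_iff hermite_wigner_kernel_def hermite_Suc algebra_simps)
  then have "hermite_wigner_integral n (Suc m) x p = 2 * x * hermite_wigner_integral n m x p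
      - gauss_integral (\<lambda>u. 2 * of_real u * hermite_wigner_kernel n m x p u)
      - 2 * of_nat m * hermite_wigner_integral n (m - 1) x p"
    unfolding hermite_wigner_integral_def
    by (simp add: gauss_integral_add gauss_integral_diff gauss_integral_cmult moderate_growth_intros
        moderate_growth_hermite_wigner_kernel)
  then show ?thesis
    unfolding hermite_wigner_integral_by_parts by (simp add: complex_eq_iff algebra_simps)
qed

lemma hermite_wigner_integral_0_0: "hermite_wigner_integral 0 0 x p = sqrt pi * exp (- (p^2))"
  using gauss_integral_cis[of "- 2 * p"]
  by (simp add: hermite_wigner_integral_def hermite_wigner_kernel_def[abs_def] power_mult_distrib)

lemma hermite_wigner_integral_eq:
  "hermite_wigner_integral n m x p = sqrt pi * exp (- (p^2)) * complex_hermite n m (Complex x p) (Complex x (- p))"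
proof (induction n arbitrary: m)
  case 0
  show ?case
    by (induction m) (simp_all add: hermite_wigner_integral_0_0 hermite_wigner_integral_Suc_right complex_hermite_0_Suc)
next
  case (Suc n)
  then show ?case
    by (simp add: hermite_wigner_integral_Suc_left complex_hermite_Suc algebra_simps)
qed

definition hermite_wigner_const :: "real \<Rightarrow> nat \<Rightarrow> nat \<Rightarrow> real" where
  "hermite_wigner_const hb n m = 1 / (pi * hb * sqrt (2^n * fact n * 2^m * fact m))"

lemma hermite_fun_product:
  assumes "hb > 0"
  shows "hermite_fun hb n y * cnj (hermite_fun hb m y') =
    of_real (sqrt pi * sqrt hb * hermite_wigner_const hb n m * exp (- (y^2 + y'^2) / (2 * hb))
      * hermite n (y / sqrt hb) * hermite m (y' / sqrt hb))"
proof -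
  define A B :: real where "A = 2^n * fact n" and "B = 2^m * fact m"
  have "root 4 a * root 4 a = sqrt a" if "a > 0" for a :: real
    using that by (simp add: root_powr_inverse sqrt_def powr_add[symmetric])
  then have root: "root 4 (pi * hb) * root 4 (pi * hb) = sqrt pi * sqrt hb"
    using assms by (simp add: real_sqrt_mult)
  have "1 / (root 4 (pi * hb) * sqrt A) * (1 / (root 4 (pi * hb) * sqrt B))
      = 1 / ((root 4 (pi * hb) * root 4 (pi * hb)) * (sqrt A * sqrt B))"
    by (simp add: ac_simps)
  also have "\<dots> = 1 / (sqrt pi * sqrt hb * sqrt (A * B))"
    unfolding root by (simp add: real_sqrt_mult)
  also have "\<dots> = sqrt pi * sqrt hb * hermite_wigner_const hb n m"
  proof -
    have "pi * hb = (sqrt pi * sqrt hb) * (sqrt pi * sqrt hb)"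
      using assms by (simp add: algebra_simps)
    then show ?thesis
      by (simp add: hermite_wigner_const_def A_def B_def mult.assoc divide_simps)
  qed
  finally have norm: "1 / (root 4 (pi * hb) * sqrt (2^n * fact n)) * (1 / (root 4 (pi * hb) * sqrt (2^m * fact m)))
      = sqrt pi * sqrt hb * hermite_wigner_const hb n m"
    unfolding A_def B_def .
  have "exp (- (y^2) / (2 * hb)) * exp (- (y'^2) / (2 * hb)) = exp (- (y^2 + y'^2) / (2 * hb))"
    by (simp add: exp_add[symmetric] diff_divide_distrib)
  moreover have "hermite_fun hb n y * cnj (hermite_fun hb m y') =
      of_real ((1 / (root 4 (pi * hb) * sqrt (2^n * fact n)) * (1 / (root 4 (pi * hb) * sqrt (2^m * fact m))))
        * (exp (- (y^2) / (2 * hb)) * exp (- (y'^2) / (2 * hb))) * hermite n (y / sqrt hb) * hermite m (y' / sqrt hb))"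
    by (simp add: hermite_fun_def hermite_poly_eq_hermite mult_ac)
  ultimately show ?thesis
    unfolding norm by simp
qed

lemma hermite_fun_product_shifted:
  assumes hb: "hb > 0"
  defines "s \<equiv> sqrt hb"
  shows "hermite_fun hb n (x + s * u) * cnj (hermite_fun hb m (x - s * u)) =
    of_real (sqrt pi * s * hermite_wigner_const hb n m * exp (- ((x / s)^2)) * exp (- (u^2))
      * hermite n (x / s + u) * hermite m (x / s - u))"
proof -
  have s: "s > 0" "s * s = hb"
    using hb by (auto simp: s_def)
  have "(x + s * u) / s = x / s + u" "(x - s * u) / s = x / s - u"
    using s by (simp_all add: field_simps)
  moreover have "exp (- ((x + s * u)^2 + (x - s * u)^2) / (2 * hb)) = exp (- ((x / s)^2)) * exp (- (u^2))"
  proof -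
    have "- ((x + s * u)^2 + (x - s * u)^2) / (2 * hb) = - ((x / s)^2) + - (u^2)"
      using s by (simp add: field_simps power2_eq_square flip: s(2))
    then show ?thesis
      by (simp only: exp_add)
  qed
  ultimately show ?thesis
    using hermite_fun_product[OF hb, of n "x + s * u" m "x - s * u"] by (simp add: s_def mult_ac)
qed

lemma cross_wigner_hermite_fun:
  fixes w :: "real^2"
  assumes hb: "hb > 0"
  defines "\<zeta> \<equiv> complex_of_vec w / sqrt hb"
  shows "cross_wigner hb (hermite_fun hb n) (hermite_fun hb m) w =
    of_real (hermite_wigner_const hb n m * exp (- (norm \<zeta>)\<^sup>2)) * complex_hermite n m \<zeta> (cnj \<zeta>)"
proof -
  define s x p where "s = sqrt hb" and "x = w$1" and "p = w$2"
  define X P where "X = x / s" and "P = p / s"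
  have s: "s > 0" "s * s = hb"
    using hb by (auto simp: s_def)
  have \<zeta>: "\<zeta> = Complex X P"
    by (simp add: \<zeta>_def complex_of_vec_def X_def P_def x_def p_def s_def complex_eq_iff)
  let ?c = "hermite_wigner_const hb n m"
  have integrand: "hermite_fun hb n (x + 2 * s * u / 2) * cnj (hermite_fun hb m (x - 2 * s * u / 2))
        * cis (- (p * (2 * s * u)) / hb)
      = of_real (sqrt pi * s * ?c * exp (- (X^2))) * (of_real (exp (- (u^2))) * hermite_wigner_kernel n m X P u)"
    for u
  proof -
    have "- (p * (2 * s * u)) / hb = - 2 * P * u"
      using s by (simp add: P_def field_simps flip: s(2))
    then show ?thesis
      using hermite_fun_product_shifted[OF hb, of n x u m]
      by (simp add: hermite_wigner_kernel_def X_def s_def mult_ac)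
  qed
  have "(\<integral>\<tau>. hermite_fun hb n (x + \<tau> / 2) * cnj (hermite_fun hb m (x - \<tau> / 2)) * cis (- (p * \<tau>) / hb) \<partial>lborel)
      = (2 * s) *\<^sub>R (\<integral>u. hermite_fun hb n (x + 2 * s * u / 2) * cnj (hermite_fun hb m (x - 2 * s * u / 2))
          * cis (- (p * (2 * s * u)) / hb) \<partial>lborel)"
    using lborel_integral_real_affine[where c = "2 * s" and t = 0 and f = "\<lambda>\<tau>. hermite_fun hb n (x + \<tau> / 2)
        * cnj (hermite_fun hb m (x - \<tau> / 2)) * cis (- (p * \<tau>) / hb)"] s
    by simp
  also have "\<dots> = of_real (2 * s * sqrt pi * s * ?c * exp (- (X^2))) * hermite_wigner_integral n m X P"
    unfolding integrand hermite_wigner_integral_def gauss_integral_def scaleR_conv_of_real by simp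
  also have "\<dots> = of_real (2 * s * sqrt pi * s * ?c * exp (- (X^2)) * (sqrt pi * exp (- (P^2))))
      * complex_hermite n m (Complex X P) (Complex X (- P))"
    unfolding hermite_wigner_integral_eq by (simp add: mult_ac)
  also have "2 * s * sqrt pi * s * ?c * exp (- (X^2)) * (sqrt pi * exp (- (P^2)))
      = 2 * pi * hb * (?c * exp (- (norm \<zeta>)\<^sup>2))"
    using s by (simp add: \<zeta> cmod_power2 exp_diff exp_minus field_simps flip: s(2))
  also have "Complex X (- P) = cnj \<zeta>"
    by (simp add: \<zeta> complex_eq_iff)
  finally show ?thesis
    unfolding cross_wigner_def x_def[symmetric] p_def[symmetric] \<zeta>[symmetric]
    using hb by (simp add: field_simps)
qed

section \<open>Laurent polynomials vanishing on the unit circle\<close>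

definition laurent_polyfun :: "(complex \<Rightarrow> complex) \<Rightarrow> bool" where
  "laurent_polyfun f \<longleftrightarrow> (\<exists>Q k. \<forall>w. w \<noteq> 0 \<longrightarrow> w^k * f w = poly Q w)"

lemma laurent_polyfunI: "(\<And>w. w \<noteq> 0 \<Longrightarrow> w^k * f w = poly Q w) \<Longrightarrow> laurent_polyfun f"
  unfolding laurent_polyfun_def by blast

lemma laurent_polyfun_const: "laurent_polyfun (\<lambda>w. c)"
  by (rule laurent_polyfunI[where k = 0 and Q = "[:c:]"]) simp

lemma laurent_polyfun_id: "laurent_polyfun (\<lambda>w. w)"
  by (rule laurent_polyfunI[where k = 0 and Q = "[:0, 1:]"]) simp

lemma laurent_polyfun_divide: "laurent_polyfun (\<lambda>w. c / w)"
  by (rule laurent_polyfunI[where k = 1 and Q = "[:c:]"]) simp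

lemma laurent_polyfun_add:
  assumes "laurent_polyfun f" "laurent_polyfun g"
  shows "laurent_polyfun (\<lambda>w. f w + g w)"
proof -
  obtain Q1 k1 Q2 k2 where "\<And>w. w \<noteq> 0 \<Longrightarrow> w^k1 * f w = poly Q1 w" "\<And>w. w \<noteq> 0 \<Longrightarrow> w^k2 * g w = poly Q2 w"
    using assms unfolding laurent_polyfun_def by blast
  then show ?thesis
    by (intro laurent_polyfunI[where k = "k1 + k2" and Q = "monom 1 k2 * Q1 + monom 1 k1 * Q2"])
       (simp add: poly_monom power_add algebra_simps)
qed

lemma laurent_polyfun_mult:
  assumes "laurent_polyfun f" "laurent_polyfun g"
  shows "laurent_polyfun (\<lambda>w. f w * g w)"
proof -
  obtain Q1 k1 Q2 k2 where "\<And>w. w \<noteq> 0 \<Longrightarrow> w^k1 * f w = poly Q1 w" "\<And>w. w \<noteq> 0 \<Longrightarrow> w^k2 * g w = poly Q2 w"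
    using assms unfolding laurent_polyfun_def by blast
  then have "w^(k1 + k2) * (f w * g w) = poly (Q1 * Q2) w" if "w \<noteq> 0" for w
    using that by (simp add: power_add poly_mult mult_ac flip: \<open>\<And>w. w \<noteq> 0 \<Longrightarrow> w^k1 * f w = poly Q1 w\<close>)
  then show ?thesis
    by (rule laurent_polyfunI)
qed

lemma laurent_polyfun_power: "laurent_polyfun f \<Longrightarrow> laurent_polyfun (\<lambda>w. f w ^ n)"
  by (induction n) (simp_all add: laurent_polyfun_const laurent_polyfun_mult)

lemma laurent_polyfun_sum:
  "(\<And>i. i \<in> A \<Longrightarrow> laurent_polyfun (f i)) \<Longrightarrow> laurent_polyfun (\<lambda>w. \<Sum>i\<in>A. f i w)"
  by (induction A rule: infinite_finite_induct) (simp_all add: laurent_polyfun_const laurent_polyfun_add)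

lemma laurent_polyfun_complex_hermite:
  "laurent_polyfun f \<Longrightarrow> laurent_polyfun g \<Longrightarrow> laurent_polyfun (\<lambda>w. complex_hermite n m (f w) (g w))"
  unfolding complex_hermite_def
  by (intro laurent_polyfun_sum laurent_polyfun_mult laurent_polyfun_power laurent_polyfun_const)

lemma infinite_unit_circle: "infinite (sphere (0::complex) 1)"
proof
  assume "finite (sphere (0::complex) 1)"
  then obtain a where a: "sphere (0::complex) 1 = {a}"
    using connected_finite_iff_sing[OF connected_sphere[of "0::complex" 1]] by auto
  have "1 \<in> sphere (0::complex) 1" "-1 \<in> sphere (0::complex) 1"
    by auto
  then show False
    unfolding a by simp
qed

lemma laurent_polyfun_eq_0_if_unit_circle:
  assumes "laurent_polyfun f" "\<And>w. cmod w = 1 \<Longrightarrow> f w = 0" "w \<noteq> 0"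
  shows "f w = 0"
proof -
  obtain Q k where Q: "\<And>w. w \<noteq> 0 \<Longrightarrow> w^k * f w = poly Q w"
    using assms(1) unfolding laurent_polyfun_def by blast
  have Q_root: "poly Q w = 0" if "w \<in> sphere 0 1" for w
  proof -
    have "cmod w = 1" "w \<noteq> 0"
      using that by auto
    then show ?thesis
      using Q[of w] assms(2)[of w] by simp
  qed
  then have "sphere 0 1 \<subseteq> {w. poly Q w = 0}"
    by blast
  then have "infinite {w. poly Q w = 0}"
    using infinite_unit_circle finite_subset by blast
  then have "Q = 0"
    using poly_roots_finite by blast
  then show ?thesis
    using Q[OF assms(3)] assms(3) by simp
qed

section \<open>Asymptotics of Hermite forms along the positive real axis\<close>

definition hermite_form :: "(nat \<Rightarrow> nat \<Rightarrow> complex) \<Rightarrow> nat \<Rightarrow> complex \<Rightarrow> complex \<Rightarrow> complex" where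
  "hermite_form B N u v = (\<Sum>n\<le>N. \<Sum>m\<le>N. B n m * complex_hermite n m u v)"

lemma tendsto_inverse_of_real_at_top: "((\<lambda>t::real. 1 / complex_of_real t) \<longlongrightarrow> 0) at_top"
proof -
  have "((\<lambda>t::real. 1 / t) \<longlongrightarrow> 0) at_top"
    by real_asymp
  from tendsto_of_real[OF this, where 'a = complex] show ?thesis
    by simp
qed

lemma sum_mult_zero_power:
  "(\<Sum>c\<le>n. f c * 0 ^ (2 * c + e)) = (if e = 0 then f 0 else (0 :: 'a::semiring_1))"
  by (induction n) (auto simp: power_0_left)

lemma sum_sum_single:
  fixes N a b :: nat
  assumes "a \<le> N" "b \<le> N"
  shows "(\<Sum>n\<le>N. \<Sum>m\<le>N. if n = a \<and> m = b then x else 0) = (x :: 'a::comm_monoid_add)"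
proof -
  have "(\<Sum>m\<le>N. if n = a \<and> m = b then x else 0) = (if n = a then x else 0)" for n
    using assms(2) by (cases "n = a") simp_all
  then show ?thesis
    using assms(1) by simp
qed

lemma tendsto_laurent_div:
  fixes a b :: complex
  shows "((\<lambda>t. (a * of_real t + b / of_real t) / of_real t) \<longlongrightarrow> a) at_top"
proof -
  have "((\<lambda>t. a + b * (1 / of_real t)^2) \<longlongrightarrow> a + b * 0^2) at_top"
    by (intro tendsto_intros tendsto_inverse_of_real_at_top)
  moreover have "\<forall>\<^sub>F t in at_top. a + b * (1 / of_real t)^2 = (a * of_real t + b / of_real t) / of_real t"
    using eventually_gt_at_top[of 0] by eventually_elim (simp add: field_simps power2_eq_square)
  ultimately show ?thesis
    by (simp add: Lim_transform_eventually)
qed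

lemma tendsto_complex_hermite_div_power:
  fixes u v :: "real \<Rightarrow> complex"
  assumes "((\<lambda>t. u t / of_real t) \<longlongrightarrow> a) at_top" "((\<lambda>t. v t / of_real t) \<longlongrightarrow> b) at_top" "n + m \<le> d"
  shows "((\<lambda>t. complex_hermite n m (u t) (v t) / of_real t ^ d)
      \<longlongrightarrow> (if n + m = d then (2 * a)^m * (2 * b)^n else 0)) at_top"
proof -
  let ?e = "d - (n + m)"
  let ?T = "\<lambda>t c. complex_hermite_coeff n m c * (2 * (u t / of_real t))^(m - c) * (2 * (v t / of_real t))^(n - c)
    * (1 / of_real t)^(2 * c + ?e)"
  have "((\<lambda>t. \<Sum>c\<le>n. ?T t c) \<longlongrightarrow>
      (\<Sum>c\<le>n. complex_hermite_coeff n m c * (2 * a)^(m - c) * (2 * b)^(n - c) * 0^(2 * c + ?e))) at_top"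
    by (intro tendsto_intros assms(1,2) tendsto_inverse_of_real_at_top)
  also have "(\<Sum>c\<le>n. complex_hermite_coeff n m c * (2 * a)^(m - c) * (2 * b)^(n - c) * 0^(2 * c + ?e))
      = (if n + m = d then (2 * a)^m * (2 * b)^n else 0)"
    using assms(3) by (simp only: sum_mult_zero_power) auto
  finally show ?thesis
  proof (rule Lim_transform_eventually)
    show "\<forall>\<^sub>F t in at_top. (\<Sum>c\<le>n. ?T t c) = complex_hermite n m (u t) (v t) / of_real t ^ d"
      using eventually_gt_at_top[of 0]
    proof eventually_elim
      case (elim t)
      have "?T t c = complex_hermite_coeff n m c * (2 * u t)^(m - c) * (2 * v t)^(n - c) / of_real t ^ d" for c
      proof (cases "c \<le> n \<and> c \<le> m")
        case True
        then have "(of_real t :: complex) ^ d = of_real t ^ (m - c) * of_real t ^ (n - c) * of_real t ^ (2 * c + ?e)"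
          using assms(3) by (simp flip: power_add)
        then show ?thesis
          using elim by (simp add: power_divide power_mult_distrib power_one_over field_simps)
      qed (auto simp: complex_hermite_coeff_eq_0)
      then show ?case
        by (simp add: complex_hermite_def sum_divide_distrib)
    qed
  qed
qed

lemma tendsto_complex_hermite_scaled_div_power:
  assumes "m \<le> n + d"
  shows "((\<lambda>t. complex_hermite n m (a * of_real t) (b / of_real t) / of_real t ^ d)
      \<longlongrightarrow> (if m = n + d then complex_hermite n m a b else 0)) at_top"
proof -
  let ?e = "n + d - m" and ?H = "complex_hermite n m a b"
  have "((\<lambda>t. ?H * (1 / of_real t)^?e) \<longlongrightarrow> ?H * 0^?e) at_top"
    by (intro tendsto_intros tendsto_inverse_of_real_at_top)
  also have "?H * 0^?e = (if m = n + d then ?H else 0)"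
    using assms by auto
  finally show ?thesis
  proof (rule Lim_transform_eventually)
    show "\<forall>\<^sub>F t in at_top. ?H * (1 / of_real t)^?e = complex_hermite n m (a * of_real t) (b / of_real t) / of_real t ^ d"
      using eventually_gt_at_top[of 0]
    proof eventually_elim
      case (elim t)
      then have t: "(of_real t :: complex) \<noteq> 0"
        by simp
      let ?Ht = "complex_hermite n m (a * of_real t) (b / of_real t)"
      have "of_real t ^ n * (of_real t ^ ?e * ?Ht) = of_real t ^ ?e * (?Ht * of_real t ^ n)"
        by (simp only: mult_ac)
      also have "\<dots> = of_real t ^ ?e * (of_real t ^ m * ?H)"
        by (simp only: complex_hermite_scale[OF t])
      also have "\<dots> = (of_real t ^ m * of_real t ^ ?e) * ?H"
        by (simp only: mult_ac)
      also have "of_real t ^ m * of_real t ^ ?e = (of_real t ^ n * of_real t ^ d :: complex)"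
        using assms by (simp flip: power_add)
      finally have "of_real t ^ ?e * ?Ht = ?H * of_real t ^ d"
        using t by (simp add: mult_ac)
      then show ?case
        using t by (simp add: power_one_over field_simps)
    qed
  qed
qed

lemma tendsto_hermite_form_top:
  assumes "\<And>n m. n \<le> N \<Longrightarrow> m \<le> N \<Longrightarrow> B n m \<noteq> 0 \<Longrightarrow> n \<le> M \<and> m \<le> M" "M \<le> N"
  shows "((\<lambda>t. hermite_form B N (\<alpha> * of_real t + \<beta> / of_real t) (cnj \<alpha> / of_real t + cnj \<beta> * of_real t)
      / of_real t ^ (2 * M)) \<longlongrightarrow> B M M * (4 * \<alpha> * cnj \<beta>)^M) at_top"
proof -
  let ?u = "\<lambda>t. \<alpha> * of_real t + \<beta> / of_real t" and ?v = "\<lambda>t. cnj \<alpha> / of_real t + cnj \<beta> * of_real t"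
  have u: "((\<lambda>t. ?u t / of_real t) \<longlongrightarrow> \<alpha>) at_top"
    by (rule tendsto_laurent_div)
  have v: "((\<lambda>t. ?v t / of_real t) \<longlongrightarrow> cnj \<beta>) at_top"
    using tendsto_laurent_div[of "cnj \<beta>" "cnj \<alpha>"] by (simp add: add.commute)
  have power: "(2 * \<alpha>)^M * (2 * cnj \<beta>)^M = (4 * \<alpha> * cnj \<beta>)^M"
    by (simp only: power_mult_distrib[symmetric]) (simp add: algebra_simps)
  have "((\<lambda>t. B n m * complex_hermite n m (?u t) (?v t) / of_real t ^ (2 * M))
      \<longlongrightarrow> (if n = M \<and> m = M then B M M * (4 * \<alpha> * cnj \<beta>)^M else 0)) at_top"
    if "n \<le> N" "m \<le> N" for n m
  proof (cases "B n m = 0")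
    case False
    then have nm: "n \<le> M" "m \<le> M"
      using assms(1) that by auto
    have "((\<lambda>t. B n m * (complex_hermite n m (?u t) (?v t) / of_real t ^ (2 * M)))
        \<longlongrightarrow> B n m * (if n + m = 2 * M then (2 * \<alpha>)^m * (2 * cnj \<beta>)^n else 0)) at_top"
      using nm by (intro tendsto_mult_left tendsto_complex_hermite_div_power u v) simp
    moreover have "B n m * (if n + m = 2 * M then (2 * \<alpha>)^m * (2 * cnj \<beta>)^n else 0)
        = (if n = M \<and> m = M then B M M * (4 * \<alpha> * cnj \<beta>)^M else 0)"
      using nm power by auto
    ultimately show ?thesis
      by simp
  qed auto
  then have "((\<lambda>t. hermite_form B N (?u t) (?v t) / of_real t ^ (2 * M))
      \<longlongrightarrow> (\<Sum>n\<le>N. \<Sum>m\<le>N. if n = M \<and> m = M then B M M * (4 * \<alpha> * cnj \<beta>)^M else 0)) at_top"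
    unfolding hermite_form_def sum_divide_distrib by (intro tendsto_sum) auto
  then show ?thesis
    by (simp only: sum_sum_single assms(2))
qed

lemma tendsto_hermite_form_bottom:
  assumes "\<And>n m. n \<le> N \<Longrightarrow> m \<le> N \<Longrightarrow> B n m \<noteq> 0 \<Longrightarrow> n0 \<le> n \<and> m \<le> M"
    and "n0 \<le> M" "M \<le> N"
  shows "((\<lambda>t. hermite_form B N (\<alpha> * of_real t) (cnj \<alpha> / of_real t) / of_real t ^ (M - n0))
      \<longlongrightarrow> B n0 M * complex_hermite n0 M \<alpha> (cnj \<alpha>)) at_top"
proof -
  have "((\<lambda>t. B n m * complex_hermite n m (\<alpha> * of_real t) (cnj \<alpha> / of_real t) / of_real t ^ (M - n0))
      \<longlongrightarrow> (if n = n0 \<and> m = M then B n0 M * complex_hermite n0 M \<alpha> (cnj \<alpha>) else 0)) at_top"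
    if "n \<le> N" "m \<le> N" for n m
  proof (cases "B n m = 0")
    case False
    then have nm: "n0 \<le> n" "m \<le> M"
      using assms(1) that by auto
    have "((\<lambda>t. B n m * (complex_hermite n m (\<alpha> * of_real t) (cnj \<alpha> / of_real t) / of_real t ^ (M - n0)))
        \<longlongrightarrow> B n m * (if m = n + (M - n0) then complex_hermite n m \<alpha> (cnj \<alpha>) else 0)) at_top"
      using nm assms(2) by (intro tendsto_mult_left tendsto_complex_hermite_scaled_div_power) simp
    moreover have "B n m * (if m = n + (M - n0) then complex_hermite n m \<alpha> (cnj \<alpha>) else 0)
        = (if n = n0 \<and> m = M then B n0 M * complex_hermite n0 M \<alpha> (cnj \<alpha>) else 0)"
      using nm assms(2) by auto
    ultimately show ?thesis
      by simp
  qed auto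
  then have "((\<lambda>t. hermite_form B N (\<alpha> * of_real t) (cnj \<alpha> / of_real t) / of_real t ^ (M - n0))
      \<longlongrightarrow> (\<Sum>n\<le>N. \<Sum>m\<le>N. if n = n0 \<and> m = M then B n0 M * complex_hermite n0 M \<alpha> (cnj \<alpha>) else 0)) at_top"
    unfolding hermite_form_def sum_divide_distrib by (intro tendsto_sum) auto
  moreover have "n0 \<le> N"
    using assms(2,3) by simp
  ultimately show ?thesis
    by (simp only: sum_sum_single assms(3))
qed

lemma hermite_form_ellipse_eq_0_off_circle:
  assumes "\<And>w. cmod w = 1 \<Longrightarrow> hermite_form B N (\<alpha> * w + \<beta> / w) (cnj \<alpha> / w + cnj \<beta> * w) = 0" "w \<noteq> 0"
  shows "hermite_form B N (\<alpha> * w + \<beta> / w) (cnj \<alpha> / w + cnj \<beta> * w) = 0"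
proof (rule laurent_polyfun_eq_0_if_unit_circle[OF _ assms])
  show "laurent_polyfun (\<lambda>w. hermite_form B N (\<alpha> * w + \<beta> / w) (cnj \<alpha> / w + cnj \<beta> * w))"
    unfolding hermite_form_def
    by (intro laurent_polyfun_sum laurent_polyfun_mult laurent_polyfun_const laurent_polyfun_complex_hermite
        laurent_polyfun_add laurent_polyfun_id laurent_polyfun_divide)
qed

lemma hermite_form_ellipse_eq_0:
  fixes I :: "nat set"
  assumes I: "I \<subseteq> {..N}" "I \<noteq> {}"
    and B: "\<And>n m. n \<le> N \<Longrightarrow> m \<le> N \<Longrightarrow> B n m \<noteq> 0 \<longleftrightarrow> n \<in> I \<and> m \<in> I"
    and \<alpha>\<beta>: "cmod \<beta> < cmod \<alpha>"
    and circle: "\<And>w. cmod w = 1 \<Longrightarrow> hermite_form B N (\<alpha> * w + \<beta> / w) (cnj \<alpha> / w + cnj \<beta> * w) = 0"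
  shows "\<beta> = 0" and "complex_hermite (Min I) (Max I) \<alpha> (cnj \<alpha>) = 0"
proof -
  have "finite I"
    using I(1) finite_subset by blast
  define M n0 where "M = Max I" and "n0 = Min I"
  have MI: "M \<in> I" and n0I: "n0 \<in> I" and bounds: "\<And>n. n \<in> I \<Longrightarrow> n0 \<le> n \<and> n \<le> M"
    using \<open>finite I\<close> I(2) by (auto simp: M_def n0_def)
  then have "M \<le> N" "n0 \<le> M"
    using I(1) by auto
  have vanish: "\<forall>\<^sub>F t in at_top.
      hermite_form B N (\<alpha> * of_real t + \<beta> / of_real t) (cnj \<alpha> / of_real t + cnj \<beta> * of_real t) = 0"
    using eventually_gt_at_top[of 0]
    by eventually_elim (rule hermite_form_ellipse_eq_0_off_circle[OF circle], simp_all)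
  have "((\<lambda>t. hermite_form B N (\<alpha> * of_real t + \<beta> / of_real t) (cnj \<alpha> / of_real t + cnj \<beta> * of_real t)
      / of_real t ^ (2 * M)) \<longlongrightarrow> B M M * (4 * \<alpha> * cnj \<beta>)^M) at_top"
    using B bounds \<open>M \<le> N\<close> by (intro tendsto_hermite_form_top) auto
  moreover have "((\<lambda>t. hermite_form B N (\<alpha> * of_real t + \<beta> / of_real t) (cnj \<alpha> / of_real t + cnj \<beta> * of_real t)
      / of_real t ^ (2 * M)) \<longlongrightarrow> 0) at_top"
    using vanish by (intro tendsto_eventually) (auto elim: eventually_mono)
  ultimately have "B M M * (4 * \<alpha> * cnj \<beta>)^M = 0"
    by (rule tendsto_unique[OF trivial_limit_at_top_linorder])
  moreover have "B M M \<noteq> 0" "\<alpha> \<noteq> 0"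
    using B MI \<open>M \<le> N\<close> \<alpha>\<beta> by auto
  ultimately show "\<beta> = 0"
    by simp
  have "((\<lambda>t. hermite_form B N (\<alpha> * of_real t) (cnj \<alpha> / of_real t) / of_real t ^ (M - n0))
      \<longlongrightarrow> B n0 M * complex_hermite n0 M \<alpha> (cnj \<alpha>)) at_top"
    using B bounds \<open>M \<le> N\<close> \<open>n0 \<le> M\<close> by (intro tendsto_hermite_form_bottom) auto
  moreover have "((\<lambda>t. hermite_form B N (\<alpha> * of_real t) (cnj \<alpha> / of_real t) / of_real t ^ (M - n0)) \<longlongrightarrow> 0) at_top"
    using vanish \<open>\<beta> = 0\<close> by (intro tendsto_eventually) (auto elim: eventually_mono)
  ultimately have "B n0 M * complex_hermite n0 M \<alpha> (cnj \<alpha>) = 0"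
    by (rule tendsto_unique[OF trivial_limit_at_top_linorder])
  moreover have "B n0 M \<noteq> 0"
    using B MI n0I \<open>M \<le> N\<close> \<open>n0 \<le> M\<close> by auto
  ultimately show "complex_hermite (Min I) (Max I) \<alpha> (cnj \<alpha>) = 0"
    by (simp add: M_def n0_def)
qed

section \<open>Centered Wigner functions vanishing on a circle\<close>

lemma centered_wigner_eq_hermite_form:
  fixes S :: "real^2^2" and z :: "real^2"
  assumes hb: "hb > 0"
    and W: "\<And>z. wigner hb f z = (\<Sum>n\<le>N. \<Sum>m\<le>N. b n * cnj (b m) *
      cross_wigner hb (hermite_fun hb n) (hermite_fun hb m) (S *v (z - 0)))"
  defines "\<zeta> \<equiv> complex_of_vec (S *v z) / sqrt hb"
  shows "wigner hb f z = of_real (exp (- (norm \<zeta>)\<^sup>2)) *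
    hermite_form (\<lambda>n m. b n * cnj (b m) * of_real (hermite_wigner_const hb n m)) N \<zeta> (cnj \<zeta>)"
  unfolding W cross_wigner_hermite_fun[OF hb] hermite_form_def \<zeta>_def
  by (simp add: sum_distrib_left mult_ac)

lemma hermite_form_ellipse_laguerre:
  fixes I :: "nat set"
  assumes I: "I \<subseteq> {..N}" "I \<noteq> {}"
    and B: "\<And>n m. n \<le> N \<Longrightarrow> m \<le> N \<Longrightarrow> B n m \<noteq> 0 \<longleftrightarrow> n \<in> I \<and> m \<in> I"
    and norms: "(cmod \<alpha>)^2 - (cmod \<beta>)^2 = r" "r > 0"
    and circle: "\<And>w. cmod w = 1 \<Longrightarrow> hermite_form B N (\<alpha> * w + \<beta> / w) (cnj \<alpha> / w + cnj \<beta> * w) = 0"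
  shows "\<exists>n k. n \<ge> 1 \<and> gen_laguerre n k (2 * r) = 0"
proof -
  have "(cmod \<beta>)^2 < (cmod \<alpha>)^2"
    using norms by linarith
  then have "cmod \<beta> < cmod \<alpha>"
    by (rule power_less_imp_less_base) simp
  from hermite_form_ellipse_eq_0[OF I B this circle]
  have "\<beta> = 0" and root: "complex_hermite (Min I) (Max I) \<alpha> (cnj \<alpha>) = 0"
    by auto
  with norms \<open>cmod \<beta> < cmod \<alpha>\<close> have "(cmod \<alpha>)^2 = r" "\<alpha> \<noteq> 0"
    by auto
  moreover have "Min I \<le> Max I"
    using I finite_subset by (intro Min_le Max_in) auto
  ultimately have "gen_laguerre (Min I) (Max I - Min I) (2 * r) = 0"
    using root complex_hermite_eq_0_iff_gen_laguerre by auto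
  moreover from this have "Min I \<ge> 1"
    by (cases "Min I") auto
  ultimately show ?thesis
    by blast
qed

lemma centered_wigner_circle_laguerre_root:
  assumes hb: "hb > 0" and bounded: "bounded (nodal_set (wigner hb f))" and centered: "centered_at hb f 0"
    and R: "R > 0" and circle: "\<And>z. norm z = R \<Longrightarrow> wigner hb f z = 0"
  shows "\<exists>n k. n \<ge> 1 \<and> gen_laguerre n k (2 * R^2 / hb) = 0"
proof -
  obtain N b and S :: "real^2^2" where det: "det S = 1" and W: "\<And>z. wigner hb f z =
      (\<Sum>n\<le>N. \<Sum>m\<le>N. b n * cnj (b m) * cross_wigner hb (hermite_fun hb n) (hermite_fun hb m) (S *v (z - 0)))"
    using centered unfolding centered_at_def by blast
  define B where "B n m = b n * cnj (b m) * of_real (hermite_wigner_const hb n m)" for n m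
  define I where "I = {n. n \<le> N \<and> b n \<noteq> 0}"
  define \<alpha> \<beta> where "\<alpha> = of_real (R / sqrt hb) * complex_linear_part S"
    and "\<beta> = of_real (R / sqrt hb) * complex_antilinear_part S"
  note expansion = centered_wigner_eq_hermite_form[OF hb W, folded B_def]
  have B_iff: "B n m \<noteq> 0 \<longleftrightarrow> n \<in> I \<and> m \<in> I" if "n \<le> N" "m \<le> N" for n m
    using that hb by (simp add: B_def I_def hermite_wigner_const_def)
  have "I \<noteq> {}"
  proof
    assume "I = {}"
    then have "nodal_set (wigner hb f) = UNIV"
      using B_iff by (auto simp: nodal_set_def expansion hermite_form_def)
    with bounded show False
      by (simp add: not_bounded_UNIV)
  qed
  have "(cmod \<alpha>)^2 - (cmod \<beta>)^2 = R^2 / hb"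
    using det_eq_complex_parts[of "R / sqrt hb" S] det hb by (simp add: \<alpha>_def \<beta>_def power_divide)
  moreover have "hermite_form B N (\<alpha> * w + \<beta> / w) (cnj \<alpha> / w + cnj \<beta> * w) = 0" if "cmod w = 1" for w
  proof -
    have "norm (vec_of_complex (of_real R * w)) = R"
      using R that by (simp add: norm_mult)
    then have "wigner hb f (vec_of_complex (of_real R * w)) = 0"
      by (rule circle)
    moreover have "complex_of_vec (S *v vec_of_complex (of_real R * w)) / sqrt hb = \<alpha> * w + \<beta> / w"
      unfolding complex_of_vec_circle[OF that] using that hb by (simp add: \<alpha>_def \<beta>_def field_simps)
    ultimately show ?thesis
      using that by (simp add: expansion divide_conv_cnj)
  qed
  moreover have "I \<subseteq> {..N}" "R^2 / hb > 0"
    using R hb by (auto simp: I_def)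
  ultimately have "\<exists>n k. n \<ge> 1 \<and> gen_laguerre n k (2 * (R^2 / hb)) = 0"
    using hermite_form_ellipse_laguerre[of I N B \<alpha> \<beta> "R^2 / hb"] \<open>I \<noteq> {}\<close> B_iff by blast
  then show ?thesis
    by simp
qed

theorem theorem6:
  fixes hb :: real
  assumes "hb > 0"
  shows "(\<forall>(f::real \<Rightarrow> complex) (R::real).
            square_integrable f \<and> bounded (nodal_set (wigner hb f)) \<and> centered_at hb f 0
            \<and> R > 0 \<and> (\<forall>z::real^2. norm z = R \<longrightarrow> wigner hb f z = 0)
          \<longrightarrow> (\<exists>(n::nat) (k::nat) (p::real). n \<ge> 1 \<and> gen_laguerre n k p = 0
                 \<and> R = sqrt (hb * p / 2)))
       \<and> countable {R::real. R > 0 \<and> (\<exists>f::real \<Rightarrow> complex.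
            square_integrable f \<and> bounded (nodal_set (wigner hb f)) \<and> centered_at hb f 0
            \<and> (\<forall>z::real^2. norm z = R \<longrightarrow> wigner hb f z = 0))}"
proof -
  have laguerre: "\<exists>n k. n \<ge> 1 \<and> gen_laguerre n k (2 * R^2 / hb) = 0 \<and> R = sqrt (hb * (2 * R^2 / hb) / 2)"
    if "bounded (nodal_set (wigner hb f))" "centered_at hb f 0" "R > 0"
      "\<forall>z::real^2. norm z = R \<longrightarrow> wigner hb f z = 0" for f R
    using centered_wigner_circle_laguerre_root[OF assms that(1-3)] that(3,4) assms by auto
  let ?radii = "(\<lambda>p. sqrt (hb * p / 2)) ` (\<Union>n k. {p. gen_laguerre n k p = 0})"
  show ?thesis
  proof (intro conjI allI impI)
    fix f R
    assume "square_integrable f \<and> bounded (nodal_set (wigner hb f)) \<and> centered_at hb f 0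
      \<and> R > 0 \<and> (\<forall>z::real^2. norm z = R \<longrightarrow> wigner hb f z = 0)"
    then show "\<exists>n k p. n \<ge> 1 \<and> gen_laguerre n k p = 0 \<and> R = sqrt (hb * p / 2)"
      using laguerre by blast
  next
    have "countable ?radii"
      by (auto intro!: countable_image countable_UN countable_finite[OF finite_gen_laguerre_roots])
    moreover have "{R. R > 0 \<and> (\<exists>f. square_integrable f \<and> bounded (nodal_set (wigner hb f)) \<and> centered_at hb f 0
        \<and> (\<forall>z::real^2. norm z = R \<longrightarrow> wigner hb f z = 0))} \<subseteq> ?radii"
      using laguerre by (fastforce intro!: image_eqI)
    ultimately show "countable {R. R > 0 \<and> (\<exists>f. square_integrable f \<and> bounded (nodal_set (wigner hb f))
        \<and> centered_at hb f 0 \<and> (\<forall>z::real^2. norm z = R \<longrightarrow> wigner hb f z = 0))}"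
      by (rule countable_subset[rotated])
  qed
qed

end
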